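(* Let $\mathbb{L}$ be a finite label set, $\mathbb{X}=\mathbb{R}^d$, and let $\mathcal{I}$ be a finite index set with non-negative weights $\omega^{(i)}$, $i\in\mathcal{I}$, satisfying $\sum_{i\in\mathcal{I}}\omega^{(i)}=1$. For each $i\in\mathcal{I}$ let $\boldsymbol{\pi}^{(i)}=\{(w^{(i)}(I),p^{(i)}(\cdot;I))\}_{I\in\mathcal{F}(\mathbb{L})}$ be an M$\delta$-GLMB density on $\mathcal{F}(\mathbb{X}\times\mathbb{L})$. For $L\in\mathcal{F}(\mathbb{L})$ and $\ell\in L$ set $$\eta^{(L)}(\ell)=\int_{\mathbb{X}}\prod_{i\in\mathcal{I}}\big(p^{(i)}(x,\ell;L)\big)^{\omega^{(i)}}dx,$$ and assume all $\eta^{(L)}(\ell)>0$ and that $\sum_{J\subseteq\mathbb{L}}\prod_{i\in\mathcal{I}}(w^{(i)}(J))^{\omega^{(i)}}\,[\eta^{(J)}]^{J}>0$. Then the normalized weighted geometric mean $$\overline{\boldsymbol{\pi}}(\mathbf{X})=\frac{\prod_{i\in\mathcal{I}}[\boldsymbol{\pi}^{(i)}(\mathbf{X})]^{\omega^{(i)}}}{\int\prod_{i\in\mathcal{I}}[\boldsymbol{\pi}^{(i)}(\mathbf{X})]^{\omega^{(i)}}\delta\mathbf{X}}$$ is the M$\delta$-GLMB density $\overline{\boldsymbol{\pi}}=\{(\overline{w}(L),\overline{p}(\cdot;L))\}_{L\in\mathcal{F}(\mathbb{L})}$ with $$\overline{w}(L)=\frac{\prod_{i\in\mathcal{I}}(w^{(i)}(L))^{\omega^{(i)}}\,[\eta^{(L)}]^{L}}{\sum_{J\subseteq\mathbb{L}}\prod_{i\in\mathcal{I}}(w^{(i)}(J))^{\omega^{(i)}}\,[\eta^{(J)}]^{J}},\qquad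 \overline{p}(x,\ell;L)=\frac{\prod_{i\in\mathcal{I}}(p^{(i)}(x,\ell;L))^{\omega^{(i)}}}{\eta^{(L)}(\ell)}.$$ Consequently (since the weighted Kullback–Leibler average $\arg\min_{\boldsymbol{\pi}}\sum_{i\in\mathcal{I}}\omega^{(i)}D_{KL}(\boldsymbol{\pi}\,\|\,\boldsymbol{\pi}^{(i)})$ over multi-object densities equals the normalized weighted geometric mean), this M$\delta$-GLMB is the weighted Kullback–Leibler average of the $\boldsymbol{\pi}^{(i)}$.
   Context: Notation: for a real function $h$ and finite set $X$, $h^{X}=\prod_{x\in X}h(x)$ with $h^{\varnothing}=1$. $\mathcal{F}(S)$ denotes the finite subsets of $S$; $\delta_Y(X)=1$ if $X=Y$ and $0$ otherwise; $1_S$ is the indicator of $S$. For $\mathbf{x}=(x,\ell)\in\mathbb{X}\times\mathbb{L}$, $\mathcal{L}(\mathbf{x})=\ell$, $\mathcal{L}(\mathbf{X})=\{\mathcal{L}(\mathbf{x}):\mathbf{x}\in\mathbf{X}\}$, and the distinct label indicator is $\Delta(\mathbf{X})=\delta_{|\mathbf{X}|}(|\mathcal{L}(\mathbf{X})|)$. The set integral of $f$ on $\mathcal{F}(\mathbb{X}\times\mathbb{L})$ is $\int f(\mathbf{X})\delta\mathbf{X}=\sum_{n=0}^{\infty}\frac{1}{n!}\sum_{(\ell_1,\dots,\ell_n)\in\mathbb{L}^n}\int f(\{(x_1,\ell_1),\dots,(x_n,\ell_n)\})\,d(x_1,\dots,x_n)$. A multi-object density is a non-negative $\boldsymbol{\pi}$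 on $\mathcal{F}(\mathbb{X}\times\mathbb{L})$ with set integral $1$; $D_{KL}(\boldsymbol{\pi}\|\boldsymbol{\pi}')=\int\boldsymbol{\pi}(\mathbf{X})\log(\boldsymbol{\pi}(\mathbf{X})/\boldsymbol{\pi}'(\mathbf{X}))\delta\mathbf{X}$. An M$\delta$-GLMB density with parameter set $\{(w(I),p(\cdot;I))\}_{I\in\mathcal{F}(\mathbb{L})}$ is $\boldsymbol{\pi}(\mathbf{X})=\Delta(\mathbf{X})\sum_{I\in\mathcal{F}(\mathbb{L})}\delta_I(\mathcal{L}(\mathbf{X}))\,w(I)\,[p(\cdot;I)]^{\mathbf{X}}=\Delta(\mathbf{X})\,w(\mathcal{L}(\mathbf{X}))\,[p(\cdot;\mathcal{L}(\mathbf{X}))]^{\mathbf{X}}$, where $w(I)\ge0$, $\sum_{I\in\mathcal{F}(\mathbb{L})}w(I)=1$, and for each $I$ and each $\ell\in I$, $p(\cdot,\ell;I)$ is a probability density on $\mathbb{X}$ (here $[p(\cdot;I)]^{\mathbf{X}}=\prod_{(x,\ell)\in\mathbf{X}}p(x,\ell;I)$). *)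

theory Defs
  imports "HOL-Analysis.Analysis"
begin

definition gpow :: "real \<Rightarrow> real \<Rightarrow> real" where
  "gpow x a = (if a = 0 then 1 else x powr a)"

definition labels :: "('x \<times> 'l) set \<Rightarrow> 'l set" where
  "labels X = snd ` X"

definition dli :: "('x \<times> 'l) set \<Rightarrow> real" where
  "dli X = (if card X = card (labels X) then 1 else 0)"

definition lab_set :: "(nat \<Rightarrow> 'x) \<Rightarrow> (nat \<Rightarrow> 'l) \<Rightarrow> nat \<Rightarrow> ('x \<times> 'l) set" where
  "lab_set xs ls n = (\<lambda>i. (xs i, ls i)) ` {..<n}"

definition mo_set_integral :: "(('x::euclidean_space \<times> 'l::finite) set \<Rightarrow> real) \<Rightarrow> real" where
  "mo_set_integral f =
     (\<Sum>n. (1 / fact n) *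
        (\<Sum>ls \<in> ({..<n} \<rightarrow>\<^sub>E (UNIV::'l set)).
           integral\<^sup>L (PiM {..<n} (\<lambda>_. lborel)) (\<lambda>xs. f (lab_set xs ls n))))"

definition is_density :: "('x::euclidean_space \<Rightarrow> real) \<Rightarrow> bool" where
  "is_density f \<longleftrightarrow> (\<forall>x. 0 \<le> f x) \<and> has_bochner_integral lborel f 1"

definition mdglmb :: "('l set \<Rightarrow> real) \<Rightarrow> ('x \<Rightarrow> 'l \<Rightarrow> 'l set \<Rightarrow> real) \<Rightarrow> ('x \<times> 'l) set \<Rightarrow> real" where
  "mdglmb w p X = dli X * w (labels X) * (\<Prod>y\<in>X. p (fst y) (snd y) (labels X))"

definition is_mdglmb_param :: "('l::finite set \<Rightarrow> real) \<Rightarrow> ('x::euclidean_space \<Rightarrow> 'l \<Rightarrow> 'l set \<Rightarrow> real) \<Rightarrow> bool" where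
  "is_mdglmb_param w p \<longleftrightarrow> (\<forall>I. 0 \<le> w I) \<and> (\<Sum>I\<in>UNIV. w I) = 1 \<and>
     (\<forall>I. \<forall>l\<in>I. is_density (\<lambda>x. p x l I))"

definition eta :: "'i set \<Rightarrow> ('i \<Rightarrow> real) \<Rightarrow> ('i \<Rightarrow> 'x::euclidean_space \<Rightarrow> 'l \<Rightarrow> 'l set \<Rightarrow> real)
                   \<Rightarrow> 'l set \<Rightarrow> 'l \<Rightarrow> real" where
  "eta \<I> \<omega> p L l = (\<integral>x. (\<Prod>i\<in>\<I>. gpow (p i x l L) (\<omega> i)) \<partial>lborel)"

definition geo_mean :: "'i set \<Rightarrow> ('i \<Rightarrow> real) \<Rightarrow> ('i \<Rightarrow> ('x::euclidean_space \<times> 'l::finite) set \<Rightarrow> real)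
                        \<Rightarrow> ('x \<times> 'l) set \<Rightarrow> real" where
  "geo_mean \<I> \<omega> \<pi> X =
     (\<Prod>i\<in>\<I>. gpow (\<pi> i X) (\<omega> i)) / mo_set_integral (\<lambda>Y. \<Prod>i\<in>\<I>. gpow (\<pi> i Y) (\<omega> i))"

end

theory Submission
  imports Defs "HOL-Combinatorics.Multiset_Permutations"
begin

text \<open>
  Since the distinct label indicator takes only the values 0 and 1 and the exponents sum to
  one, the product \<open>\<Prod>\<^sub>i \<pi>\<^sub>i(X)\<^bsup>\<omega>\<^sub>i\<^esup>\<close> is again of M\<delta>-GLMB form, with weights
  \<open>W(L) = \<Prod>\<^sub>i w\<^sub>i(L)\<^bsup>\<omega>\<^sub>i\<^esup>\<close> and single-object factors \<open>q(x,\<ell>;L) = \<Prod>\<^sub>i p\<^sub>i(x,\<ell>;L)\<^bsup>\<omega>\<^sub>i\<^esup>\<close>.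
  In the \<open>n\<close>-th term of its set integral, label sequences with a repeated label contribute
  nothing (two points of \<open>\<real>\<^sup>d\<close> coincide only on a null set), each label set of size \<open>n\<close>
  is enumerated \<open>n!\<close> times, and Fubini turns the integral of the product into
  \<open>\<Prod>\<ell>\<in>L. \<eta>\<^sub>L(\<ell>)\<close>; so the total mass is \<open>\<Sum>\<^sub>L W(L) \<Prod>\<ell>\<in>L. \<eta>\<^sub>L(\<ell>)\<close>. Dividing each
  factor \<open>q(\<cdot>,\<ell>;L)\<close> by its integral \<open>\<eta>\<^sub>L(\<ell>)\<close> and moving these constants into the
  weights gives the claim.
\<close>

lemma gpow_nonneg: "0 \<le> gpow x a"
  by (simp add: gpow_def)

lemma gpow_mult: "0 \<le> x \<Longrightarrow> 0 \<le> y \<Longrightarrow> gpow (x * y) a = gpow x a * gpow y a"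
  by (simp add: gpow_def powr_mult)

lemma gpow_prod: "(\<And>x. x \<in> A \<Longrightarrow> 0 \<le> f x) \<Longrightarrow> gpow (\<Prod>x\<in>A. f x) a = (\<Prod>x\<in>A. gpow (f x) a)"
proof (induction A rule: infinite_finite_induct)
  case (insert x F)
  then show ?case
    by (simp add: gpow_mult prod_nonneg)
qed (simp_all add: gpow_def)

lemma prod_gpow_zero:
  assumes "(\<Sum>i\<in>I. \<omega> i) = (1::real)"
  shows "(\<Prod>i\<in>I. gpow 0 (\<omega> i)) = 0"
proof -
  obtain i where "i \<in> I" "\<omega> i \<noteq> 0"
    using assms by (metis sum.neutral zero_neq_one)
  moreover have "finite I"
    using assms by (metis sum.infinite zero_neq_one)
  ultimately show ?thesis
    by (auto simp: gpow_def intro!: prod_zero)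
qed

lemma card_enumerations_eq_fact:
  assumes "finite L" "card L = n"
  shows "card {ls \<in> {..<n} \<rightarrow>\<^sub>E (UNIV::'l set). ls ` {..<n} = L} = fact n"
proof -
  let ?A = "{ls \<in> {..<n} \<rightarrow>\<^sub>E (UNIV::'l set). ls ` {..<n} = L}"
  have "bij_betw (\<lambda>ls. map ls [0..<n]) ?A (permutations_of_set L)"
  proof (rule bij_betw_byWitness[where f'="\<lambda>xs i. if i < n then xs ! i else undefined"])
    show "\<forall>ls\<in>?A. (\<lambda>i. if i < n then map ls [0..<n] ! i else undefined) = ls"
      by (auto simp: PiE_def extensional_def fun_eq_iff)
    show "\<forall>xs\<in>permutations_of_set L. map (\<lambda>i. if i < n then xs ! i else undefined) [0..<n] = xs"
      using assms by (auto simp: permutations_of_set_def list_eq_iff_nth_eq distinct_card)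
    show "(\<lambda>ls. map ls [0..<n]) ` ?A \<subseteq> permutations_of_set L"
    proof (rule image_subsetI)
      fix ls assume ls: "ls \<in> ?A"
      then have "inj_on ls {..<n}"
        using assms by (intro eq_card_imp_inj_on) auto
      with ls show "map ls [0..<n] \<in> permutations_of_set L"
        by (auto simp: permutations_of_set_def distinct_map atLeast0LessThan)
    qed
    show "(\<lambda>xs i. if i < n then xs ! i else undefined) ` permutations_of_set L \<subseteq> ?A"
    proof (rule image_subsetI)
      fix xs assume xs: "xs \<in> permutations_of_set L"
      then have "length xs = n"
        using assms by (auto simp: permutations_of_set_def distinct_card)
      then have "(\<lambda>i. if i < n then xs ! i else undefined) ` {..<n} = set xs"
        by (auto simp: set_conv_nth image_def)
      with xs show "(\<lambda>i. if i < n then xs ! i else undefined) \<in> ?A"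
        by (auto simp: permutations_of_set_def PiE_def extensional_def)
    qed
  qed
  then show ?thesis
    using assms by (simp add: bij_betw_same_card)
qed

lemma sum_injective_enumerations:
  fixes F :: "'l::finite set \<Rightarrow> 'a::{comm_semiring_1, semiring_char_0}"
  shows "(\<Sum>ls\<in>{..<n} \<rightarrow>\<^sub>E UNIV. if inj_on ls {..<n} then F (ls ` {..<n}) else 0)
       = fact n * (\<Sum>L | card L = n. F L)"
proof -
  let ?h = "\<lambda>ls. if inj_on ls {..<n} then F (ls ` {..<n}) else 0"
  let ?fiber = "\<lambda>L. {ls \<in> {..<n} \<rightarrow>\<^sub>E UNIV. ls ` {..<n} = L}"
  have fiber: "sum ?h (?fiber L) = (if card L = n then fact n * F L else 0)" for L
  proof (cases "card L = n")
    case True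
    then have "sum ?h (?fiber L) = sum (\<lambda>_. F L) (?fiber L)"
      by (intro sum.cong) (auto intro: eq_card_imp_inj_on)
    then show ?thesis
      using True card_enumerations_eq_fact[OF finite True] by simp
  next
    case False
    then show ?thesis
      by (intro trans[OF sum.neutral]) (auto simp: card_image)
  qed
  have "sum ?h ({..<n} \<rightarrow>\<^sub>E UNIV) = (\<Sum>L\<in>UNIV. sum ?h (?fiber L))"
    by (rule sum.group[symmetric]) (auto simp: finite_PiE)
  also have "\<dots> = fact n * (\<Sum>L | card L = n. F L)"
    by (simp add: fiber sum.If_cases sum_distrib_left)
  finally show ?thesis .
qed

lemma AE_PiM_lborel_coordinates_distinct:
  fixes i j n :: nat
  assumes "i \<noteq> j" "i < n" "j < n"
  shows "AE xs in PiM {..<n} (\<lambda>_. lborel::'x::euclidean_space measure). xs i \<noteq> xs j"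
proof -
  interpret P: product_sigma_finite "\<lambda>_::nat. lborel::'x measure"
    by (simp add: product_sigma_finite_def sigma_finite_lborel)
  define J where "J = {..<n} - {i}"
  have IJ: "{..<n} = insert i J" "finite J" "i \<notin> J" "j \<in> J"
    using assms by (auto simp: J_def)
  let ?M = "PiM (insert i J) (\<lambda>_::nat. lborel::'x measure)"
  define D where "D = {xs \<in> space ?M. xs i = xs j}"
  have D: "D \<in> sets ?M"
    unfolding D_def by (rule measurable_equality_set) (use IJ in auto)
  have "emeasure ?M D = (\<integral>\<^sup>+ x. (\<integral>\<^sup>+ y. indicator D (x(i := y)) \<partial>lborel) \<partial>PiM J (\<lambda>_. lborel))"
    using D IJ by (simp add: P.product_nn_integral_insert[symmetric])
  also have "\<dots> = (\<integral>\<^sup>+ x. emeasure (lborel::'x measure) {x j} \<partial>PiM J (\<lambda>_. lborel))"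
  proof (rule nn_integral_cong)
    fix x assume "x \<in> space (PiM J (\<lambda>_::nat. lborel::'x measure))"
    then have "x(i := y) \<in> space ?M" for y
      using IJ by (auto simp: space_PiM PiE_def extensional_def)
    then have "indicator D (x(i := y)) = (indicator {x j} y :: ennreal)" for y
      using IJ by (auto simp: D_def indicator_def)
    then show "(\<integral>\<^sup>+ y. indicator D (x(i := y)) \<partial>lborel) = emeasure lborel {x j}"
      by simp
  qed
  also have "\<dots> = 0"
    by (simp add: emeasure_lborel_countable)
  finally have "D \<in> null_sets ?M"
    using D by auto
  then show ?thesis
    unfolding IJ(1) by (rule AE_I') (auto simp: D_def)
qed

lemma prod_gpow_mdglmb:
  assumes "(\<Sum>i\<in>I. \<omega> i) = (1::real)"
    and "\<And>i L. i \<in> I \<Longrightarrow> 0 \<le> w i L"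
    and "\<And>i x l L. i \<in> I \<Longrightarrow> l \<in> L \<Longrightarrow> 0 \<le> p i x l L"
  shows "(\<Prod>i\<in>I. gpow (mdglmb (w i) (p i) X) (\<omega> i)) =
     mdglmb (\<lambda>L. \<Prod>i\<in>I. gpow (w i L) (\<omega> i)) (\<lambda>x l L. \<Prod>i\<in>I. gpow (p i x l L) (\<omega> i)) X"
proof (cases "dli X = 0")
  case True
  then show ?thesis
    using prod_gpow_zero[OF assms(1)] by (simp add: mdglmb_def)
next
  case False
  then have dli: "dli X = 1"
    by (simp add: dli_def split: if_splits)
  let ?L = "labels X"
  have "y \<in> X \<Longrightarrow> snd y \<in> ?L" for y
    by (auto simp: labels_def)
  then have "(\<Prod>i\<in>I. gpow (mdglmb (w i) (p i) X) (\<omega> i)) =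
        (\<Prod>i\<in>I. gpow (w i ?L) (\<omega> i) * (\<Prod>y\<in>X. gpow (p i (fst y) (snd y) ?L) (\<omega> i)))"
    using dli assms(2,3) by (intro prod.cong) (auto simp: mdglmb_def gpow_mult prod_nonneg gpow_prod)
  also have "\<dots> = (\<Prod>i\<in>I. gpow (w i ?L) (\<omega> i)) * (\<Prod>y\<in>X. \<Prod>i\<in>I. gpow (p i (fst y) (snd y) ?L) (\<omega> i))"
    by (simp add: prod.distrib prod.swap[of _ I])
  finally show ?thesis
    using dli by (simp add: mdglmb_def)
qed

lemma mdglmb_lab_set_inj:
  assumes "inj_on ls {..<n}"
  shows "mdglmb W q (lab_set xs ls n) = W (ls ` {..<n}) * (\<Prod>k<n. q (xs k) (ls k) (ls ` {..<n}))"
proof -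
  have inj: "inj_on (\<lambda>k. (xs k, ls k)) {..<n}"
    using assms by (auto simp: inj_on_def)
  have labels: "labels (lab_set xs ls n) = ls ` {..<n}"
    by (auto simp: labels_def lab_set_def image_image)
  have "card (lab_set xs ls n) = n" "card (ls ` {..<n}) = n"
    using inj assms by (simp_all add: lab_set_def card_image)
  then have "dli (lab_set xs ls n) = 1"
    by (simp add: dli_def labels)
  then show ?thesis
    unfolding mdglmb_def labels by (simp add: lab_set_def prod.reindex[OF inj])
qed

lemma mdglmb_lab_set_repeated_label:
  assumes "i < n" "j < n" "ls i = ls j" "xs i \<noteq> xs j"
  shows "mdglmb W q (lab_set xs ls n) = 0"
proof -
  let ?X = "lab_set xs ls n"
  have "\<not> inj_on snd ?X"
    using assms unfolding inj_on_def lab_set_def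
    by (auto intro!: bexI[of _ "(xs i, ls i)"] bexI[of _ "(xs j, ls j)"])
  then have "card (labels ?X) \<noteq> card ?X"
    using eq_card_imp_inj_on[of ?X snd] unfolding labels_def lab_set_def by auto
  then show ?thesis
    by (simp add: mdglmb_def dli_def)
qed

lemma integral_mdglmb_lab_set:
  fixes q :: "'x::euclidean_space \<Rightarrow> 'l \<Rightarrow> 'l set \<Rightarrow> real"
  assumes "\<And>L l. l \<in> L \<Longrightarrow> integrable lborel (\<lambda>x. q x l L)"
  shows "integral\<^sup>L (PiM {..<n} (\<lambda>_. lborel)) (\<lambda>xs. mdglmb W q (lab_set xs ls n)) =
    (if inj_on ls {..<n}
     then W (ls ` {..<n}) * (\<Prod>l\<in>ls ` {..<n}. integral\<^sup>L lborel (\<lambda>x. q x l (ls ` {..<n})))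
     else 0)"
proof (cases "inj_on ls {..<n}")
  case True
  interpret P: product_sigma_finite "\<lambda>_::nat. lborel::'x measure"
    by (simp add: product_sigma_finite_def sigma_finite_lborel)
  let ?L = "ls ` {..<n}"
  have "integral\<^sup>L (PiM {..<n} (\<lambda>_. lborel)) (\<lambda>xs. mdglmb W q (lab_set xs ls n))
      = W ?L * integral\<^sup>L (PiM {..<n} (\<lambda>_. lborel)) (\<lambda>xs. \<Prod>k<n. q (xs k) (ls k) ?L)"
    by (simp add: mdglmb_lab_set_inj[OF True])
  also have "\<dots> = W ?L * (\<Prod>k<n. integral\<^sup>L lborel (\<lambda>x. q x (ls k) ?L))"
    using assms by (subst P.product_integral_prod) auto
  also have "\<dots> = W ?L * (\<Prod>l\<in>?L. integral\<^sup>L lborel (\<lambda>x. q x l ?L))"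
    by (simp add: prod.reindex[OF True])
  finally show ?thesis
    using True by simp
next
  case False
  then obtain i j where ij: "i \<noteq> j" "i < n" "j < n" "ls i = ls j"
    unfolding inj_on_def by auto
  have "AE xs in PiM {..<n} (\<lambda>_. lborel::'x measure). mdglmb W q (lab_set xs ls n) = 0"
    using AE_PiM_lborel_coordinates_distinct[OF ij(1-3)]
    by eventually_elim (use mdglmb_lab_set_repeated_label ij in blast)
  then show ?thesis
    using False by (simp add: integral_eq_zero_AE)
qed

lemma mo_set_integral_mdglmb:
  fixes q :: "'x::euclidean_space \<Rightarrow> 'l::finite \<Rightarrow> 'l set \<Rightarrow> real"
  assumes "\<And>L l. l \<in> L \<Longrightarrow> integrable lborel (\<lambda>x. q x l L)"
  shows "mo_set_integral (mdglmb W q) = (\<Sum>L\<in>UNIV. W L * (\<Prod>l\<in>L. integral\<^sup>L lborel (\<lambda>x. q x l L)))"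
proof -
  define F where "F = (\<lambda>L. W L * (\<Prod>l\<in>L. integral\<^sup>L lborel (\<lambda>x. q x l L)))"
  have card_le: "card L \<le> CARD('l)" for L :: "'l set"
    by (rule card_mono) auto
  have "(\<Sum>ls\<in>{..<n} \<rightarrow>\<^sub>E UNIV.
          integral\<^sup>L (PiM {..<n} (\<lambda>_. lborel)) (\<lambda>xs. mdglmb W q (lab_set xs ls n)))
      = fact n * (\<Sum>L | card L = n. F L)" for n
    using sum_injective_enumerations[of n F, unfolded F_def]
    by (simp add: integral_mdglmb_lab_set[OF assms] F_def)
  then have "mo_set_integral (mdglmb W q) = (\<Sum>n. \<Sum>L | card L = n. F L)"
    by (simp add: mo_set_integral_def)
  also have "\<dots> = (\<Sum>n\<le>CARD('l). \<Sum>L | card L = n. F L)"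
    using card_le by (intro suminf_finite sum.neutral) (auto simp: not_le, metis not_le)
  also have "\<dots> = (\<Sum>L\<in>UNIV. F L)"
    using sum.group[of UNIV "{..CARD('l)}" card F] card_le by auto
  finally show ?thesis
    by (simp add: F_def)
qed

lemma mdglmb_rescale:
  assumes "finite X" "\<And>L l. l \<in> L \<Longrightarrow> c L l \<noteq> 0"
  shows "mdglmb W q X / S = mdglmb (\<lambda>L. W L * (\<Prod>l\<in>L. c L l) / S) (\<lambda>x l L. q x l L / c L l) X"
proof (cases "dli X = 0")
  case True
  then show ?thesis
    by (simp add: mdglmb_def)
next
  case False
  then have dli: "dli X = 1" and "card X = card (labels X)"
    by (auto simp: dli_def split: if_splits)
  then have "inj_on snd X"
    using eq_card_imp_inj_on[OF assms(1), of snd] by (simp add: labels_def)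
  then have "(\<Prod>y\<in>X. c (labels X) (snd y)) = (\<Prod>l\<in>labels X. c (labels X) l)"
    by (simp add: labels_def prod.reindex)
  moreover have "(\<Prod>l\<in>labels X. c (labels X) l) \<noteq> 0"
    using assms by (simp add: labels_def)
  ultimately show ?thesis
    using dli by (simp add: mdglmb_def prod_dividef)
qed

lemma is_mdglmb_param_normalize:
  assumes "\<And>L. 0 \<le> W L" "\<And>x l L. 0 \<le> q x l L"
    and "\<And>L l. l \<in> L \<Longrightarrow> has_bochner_integral lborel (\<lambda>x. q x l L) (c L l)"
    and "\<And>L l. l \<in> L \<Longrightarrow> c L l > 0"
    and "S = (\<Sum>J\<in>UNIV. W J * (\<Prod>l\<in>J. c J l))" "S > 0"
  shows "is_mdglmb_param (\<lambda>L. W L * (\<Prod>l\<in>L. c L l) / S) (\<lambda>x l L. q x l L / c L l)"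
  unfolding is_mdglmb_param_def is_density_def
proof (intro conjI allI ballI)
  show "0 \<le> W L * (\<Prod>l\<in>L. c L l) / S" for L
    using assms(1,4,6) by (intro divide_nonneg_pos mult_nonneg_nonneg prod_nonneg) (auto intro: less_imp_le)
  show "(\<Sum>L\<in>UNIV. W L * (\<Prod>l\<in>L. c L l) / S) = 1"
    using assms(5,6) by (simp add: sum_divide_distrib[symmetric])
  fix L :: "'a set" and l assume "l \<in> L"
  then show "0 \<le> q x l L / c L l" for x
    using assms(2,4) by (simp add: less_imp_le)
  show "has_bochner_integral lborel (\<lambda>x. q x l L / c L l) 1"
    using has_bochner_integral_divide_zero[OF assms(3)[OF \<open>l \<in> L\<close>], where c = "c L l"]
      assms(4)[OF \<open>l \<in> L\<close>]
    by simp
qed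

theorem proposition1:
  fixes \<I> :: "'i set" and \<omega> :: "'i \<Rightarrow> real"
    and w :: "'i \<Rightarrow> 'l::finite set \<Rightarrow> real"
    and p :: "'i \<Rightarrow> 'x::euclidean_space \<Rightarrow> 'l \<Rightarrow> 'l set \<Rightarrow> real"
  assumes fin: "finite \<I>"
    and om_nonneg: "\<forall>i\<in>\<I>. 0 \<le> \<omega> i"
    and om_sum: "(\<Sum>i\<in>\<I>. \<omega> i) = 1"
    and glmb: "\<forall>i\<in>\<I>. is_mdglmb_param (w i) (p i)"
    and eta_pos: "\<forall>L. \<forall>l\<in>L. eta \<I> \<omega> p L l > 0"
    and den_pos: "(\<Sum>J\<in>UNIV. (\<Prod>i\<in>\<I>. gpow (w i J) (\<omega> i)) * (\<Prod>l\<in>J. eta \<I> \<omega> p J l)) > 0"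
  shows "let S = (\<Sum>J\<in>UNIV. (\<Prod>i\<in>\<I>. gpow (w i J) (\<omega> i)) * (\<Prod>l\<in>J. eta \<I> \<omega> p J l));
             wbar = (\<lambda>L. (\<Prod>i\<in>\<I>. gpow (w i L) (\<omega> i)) * (\<Prod>l\<in>L. eta \<I> \<omega> p L l) / S);
             pbar = (\<lambda>x l L. (\<Prod>i\<in>\<I>. gpow (p i x l L) (\<omega> i)) / eta \<I> \<omega> p L l)
         in is_mdglmb_param wbar pbar \<and>
            (\<forall>X. finite X \<longrightarrow>
               geo_mean \<I> \<omega> (\<lambda>i. mdglmb (w i) (p i)) X = mdglmb wbar pbar X)"
proof -
  define W where "W = (\<lambda>L. \<Prod>i\<in>\<I>. gpow (w i L) (\<omega> i))"
  define q where "q = (\<lambda>x l L. \<Prod>i\<in>\<I>. gpow (p i x l L) (\<omega> i))"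
  define S where "S = (\<Sum>J\<in>UNIV. W J * (\<Prod>l\<in>J. eta \<I> \<omega> p J l))"
  define wbar where "wbar = (\<lambda>L. W L * (\<Prod>l\<in>L. eta \<I> \<omega> p L l) / S)"
  define pbar where "pbar = (\<lambda>x l L. q x l L / eta \<I> \<omega> p L l)"
  have eta_q: "eta \<I> \<omega> p L l = integral\<^sup>L lborel (\<lambda>x. q x l L)" for L l
    by (simp add: eta_def q_def)
  have q_integrable: "integrable lborel (\<lambda>x. q x l L)" if "l \<in> L" for L l
    using eta_pos that not_integrable_integral_eq[of lborel "\<lambda>x. q x l L"] by (force simp: eta_q)
  have geo: "(\<lambda>X. \<Prod>i\<in>\<I>. gpow (mdglmb (w i) (p i) X) (\<omega> i)) = mdglmb W q"
    using glmb unfolding W_def q_def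
    by (intro ext prod_gpow_mdglmb[OF om_sum]) (auto simp: is_mdglmb_param_def is_density_def)
  have mass: "mo_set_integral (mdglmb W q) = S"
    unfolding S_def eta_q by (rule mo_set_integral_mdglmb[OF q_integrable])
  have "geo_mean \<I> \<omega> (\<lambda>i. mdglmb (w i) (p i)) X = mdglmb W q X / S" for X
    unfolding geo_mean_def geo mass using fun_cong[OF geo, of X] by simp
  moreover have "mdglmb W q X / S = mdglmb wbar pbar X" if "finite X" for X
    using eta_pos unfolding wbar_def pbar_def by (intro mdglmb_rescale[OF that]) (metis less_irrefl)
  moreover have "is_mdglmb_param wbar pbar"
    using eta_pos den_pos q_integrable unfolding wbar_def pbar_def
    by (intro is_mdglmb_param_normalize)
       (auto simp: W_def q_def S_def eta_q prod_nonneg gpow_nonneg has_bochner_integral_integrable)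
  ultimately show ?thesis
    unfolding Let_def wbar_def pbar_def W_def q_def S_def by auto
qed

end
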